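(* Consider the discrete all-pay auction in the model without ties, with values drawn i.i.d. from a distribution with full support on $X$. There is at most one symmetric equilibrium bidding function: if $\beta$ and $\beta'$ are both SE bidding functions then $\beta=\beta'$.
   Context: Model. There are $n\ge 2$ risk-neutral bidders competing for one indivisible object. Normalise the grid so that values and bids lie in $X=\{0,1,2,\dots,x\}$ for some $x\in\mathbb N$. Each bidder $i$ privately learns a value $v_i\in X$; values are drawn independently from a common distribution in which every element of $X$ has strictly positive probability. Each bidder submits a bid $b_i\in X$. A (pure) strategy is a bidding function $\beta:X\to X$. In the model without ties, bidder $i$ wins iff $b_i>b_j$ for all $j\neq i$ (if the highest bid is tied, nobody wins). In the all-pay auction, a bidder with value $v_i$ bidding $b_i$ gets expected payoff $v_i\Pr(i\text{ wins})-b_i$ (everyone pays their bid). An equilibrium is a profile of bidding functions such that each bidder's bidding function maximises their expected payoff given the others' bidding functions (a pure-strategy Bayes–Nash equilibrium) and such that no bidder uses a weakly dominated bidding function (a bidding function is weakly dominated if some other bidding function yields at least as high expected payoff against every profile of opponents' bidding functions, and strictly higher against some). A symmetric equilibrium (SE) is an equilibrium in which all bidders use the same bidding function $\beta$. *)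

theory Defs
  imports Complex_Main "HOL-Library.FuncSet"
begin

text \<open>Grid X = {0..x}. Bidding functions are extensional maps X \<rightarrow> X.
  p v is the probability of value v. m = n - 1 is the number of opponents.\<close>

definition strategies :: "nat \<Rightarrow> (nat \<Rightarrow> nat) set" where
  "strategies x = {0..x} \<rightarrow>\<^sub>E {0..x}"

definition below_prob :: "nat \<Rightarrow> (nat \<Rightarrow> real) \<Rightarrow> (nat \<Rightarrow> nat) \<Rightarrow> nat \<Rightarrow> real" where
  "below_prob x p g b = (\<Sum>w\<in>{0..x}. if g w < b then p w else 0)"

text \<open>Winning probability with bid b against opponents 0..m-1 using sigma j
  (no ties: win iff strictly above all other bids; values independent).\<close>
definition win_prob :: "nat \<Rightarrow> (nat \<Rightarrow> real) \<Rightarrow> nat \<Rightarrow> (nat \<Rightarrow> nat \<Rightarrow> nat) \<Rightarrow> nat \<Rightarrow> real" where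
  "win_prob x p m \<sigma> b = (\<Prod>j<m. below_prob x p (\<sigma> j) b)"

definition payoff :: "nat \<Rightarrow> (nat \<Rightarrow> real) \<Rightarrow> nat \<Rightarrow> (nat \<Rightarrow> nat) \<Rightarrow> (nat \<Rightarrow> nat \<Rightarrow> nat) \<Rightarrow> real" where
  "payoff x p m g \<sigma> = (\<Sum>v\<in>{0..x}. p v * (real v * win_prob x p m \<sigma> (g v) - real (g v)))"

definition opp_profiles :: "nat \<Rightarrow> nat \<Rightarrow> (nat \<Rightarrow> nat \<Rightarrow> nat) set" where
  "opp_profiles x m = {\<sigma>. \<forall>j<m. \<sigma> j \<in> strategies x}"

definition weakly_dominated :: "nat \<Rightarrow> (nat \<Rightarrow> real) \<Rightarrow> nat \<Rightarrow> (nat \<Rightarrow> nat) \<Rightarrow> bool" where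
  "weakly_dominated x p m g \<longleftrightarrow>
     (\<exists>h\<in>strategies x.
        (\<forall>\<sigma>\<in>opp_profiles x m. payoff x p m h \<sigma> \<ge> payoff x p m g \<sigma>) \<and>
        (\<exists>\<sigma>\<in>opp_profiles x m. payoff x p m h \<sigma> > payoff x p m g \<sigma>))"

definition is_SE :: "nat \<Rightarrow> (nat \<Rightarrow> real) \<Rightarrow> nat \<Rightarrow> (nat \<Rightarrow> nat) \<Rightarrow> bool" where
  "is_SE x p n \<beta> \<longleftrightarrow>
     \<beta> \<in> strategies x \<and>
     (\<forall>g\<in>strategies x. payoff x p (n - 1) g (\<lambda>_. \<beta>) \<le> payoff x p (n - 1) \<beta> (\<lambda>_. \<beta>)) \<and>
     \<not> weakly_dominated x p (n - 1) \<beta>"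

end

theory Submission
  imports Defs
begin

text \<open>Against opponents playing a symmetric equilibrium function \<open>\<beta>\<close>, every type \<open>v\<close> bids
  optimally, and the win probability \<open>W\<close> is nondecreasing in the bid; single crossing of
  \<open>v W(b) - b\<close> then makes \<open>\<beta>\<close> nondecreasing. Suppose two equilibrium functions \<open>\<beta>, \<beta>'\<close> first
  differ at \<open>v\<close>, with \<open>b = \<beta> v < \<beta>' v = b'\<close>. By monotonicity, a bid of \<open>b\<close> beats an opponent
  equally often under \<open>\<beta>\<close> and \<open>\<beta>'\<close>, whereas \<open>b'\<close> beats a \<open>\<beta>'\<close>-opponent exactly when its value is
  below \<open>v\<close>. Type \<open>v\<close> prefers \<open>b'\<close> to \<open>b\<close> under \<open>\<beta>'\<close>, and \<open>b\<close> to the feasible bid \<open>b + 1 \<le> b'\<close>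
  under \<open>\<beta>\<close>; chaining the two preferences, the probability of beating every opponent with
  \<open>b + 1\<close> under \<open>\<beta>\<close> is at most that of all opponents having value below \<open>v\<close>. But \<open>b + 1\<close>
  also beats every opponent of value exactly \<open>v\<close>, which has positive probability.\<close>

lemma optimal_bid_mono:
  fixes W :: "nat \<Rightarrow> real" and v v' :: real and b b' :: nat
  assumes "mono W" and "v < v'"
    and "v * W b' - b' \<le> v * W b - b"
    and "v' * W b - b \<le> v' * W b' - b'"
  shows "b \<le> b'"
proof (rule ccontr)
  assume "\<not> b \<le> b'"
  then have "W b' \<le> W b" and "real b' < real b"
    using \<open>mono W\<close> by (auto simp: mono_def)
  moreover have "(v' - v) * (W b - W b') \<le> 0"
    using assms(3,4) by (simp add: algebra_simps)
  ultimately have "W b = W b'"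
    using \<open>v < v'\<close> by (smt (verit) mult_pos_pos)
  then show False
    using assms(3) \<open>real b' < real b\<close> by simp
qed

lemma win_prob_symmetric: "win_prob x p m (\<lambda>_. g) b = below_prob x p g b ^ m"
  unfolding win_prob_def by simp

lemma below_prob_nonneg:
  assumes "\<forall>v\<in>{0..x}. p v \<ge> 0"
  shows "0 \<le> below_prob x p g b"
  unfolding below_prob_def using assms by (intro sum_nonneg) auto

lemma below_prob_mono:
  assumes "\<forall>v\<in>{0..x}. p v \<ge> 0"
  shows "mono (below_prob x p g)"
  unfolding below_prob_def using assms by (intro monoI sum_mono) auto

lemma below_prob_cong:
  assumes "\<forall>w\<in>{0..x}. g w < b \<longleftrightarrow> h w < c"
  shows "below_prob x p g b = below_prob x p h c"
  unfolding below_prob_def using assms by (intro sum.cong) auto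

lemma below_prob_id_Suc:
  assumes "v \<le> x"
  shows "below_prob x p id (Suc v) = below_prob x p id v + p v"
proof -
  have "below_prob x p id (Suc v)
      = (\<Sum>w\<in>{0..x}. (if w < v then p w else 0) + (if w = v then p w else 0))"
    unfolding below_prob_def by (intro sum.cong) auto
  then show ?thesis
    using assms by (simp add: sum.distrib below_prob_def)
qed

lemma below_prob_id_le:
  assumes "\<forall>v\<in>{0..x}. p v \<ge> 0" and "\<forall>w\<in>{0..x}. w < d \<longrightarrow> g w < b"
  shows "below_prob x p id d \<le> below_prob x p g b"
  unfolding below_prob_def using assms by (intro sum_mono) auto

lemma SE_strategy: "is_SE x p n \<beta> \<Longrightarrow> \<beta> \<in> strategies x"
  unfolding is_SE_def by simp

lemma SE_le_bound:
  assumes "is_SE x p n \<beta>" and "v \<le> x"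
  shows "\<beta> v \<le> x"
  using SE_strategy[OF assms(1)] assms(2) unfolding strategies_def by auto

text \<open>The equilibrium function is a best response type by type, since a deviation at \<open>v\<close> alone
  changes the payoff by \<open>p v > 0\<close> times the change in interim payoff.\<close>
lemma SE_best_response:
  assumes pos: "\<forall>v\<in>{0..x}. p v > 0" and se: "is_SE x p n \<beta>"
    and "v \<le> x" and "b \<le> x"
  shows "real v * below_prob x p \<beta> b ^ (n - 1) - real b
       \<le> real v * below_prob x p \<beta> (\<beta> v) ^ (n - 1) - real (\<beta> v)"
proof -
  let ?u = "\<lambda>w c. p w * (real w * win_prob x p (n - 1) (\<lambda>_. \<beta>) c - real c)"
  define R where "R = (\<Sum>w\<in>{0..x} - {v}. ?u w (\<beta> w))"
  have "\<beta>(v := b) \<in> strategies x"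
    using SE_strategy[OF se] assms(3,4) unfolding strategies_def
    by (metis PiE_fun_upd atLeastAtMost_iff insert_absorb zero_le)
  then have "payoff x p (n - 1) (\<beta>(v := b)) (\<lambda>_. \<beta>) \<le> payoff x p (n - 1) \<beta> (\<lambda>_. \<beta>)"
    using se unfolding is_SE_def by blast
  moreover have "(\<Sum>w\<in>{0..x} - {v}. ?u w ((\<beta>(v := b)) w)) = R"
    unfolding R_def by (intro sum.cong) auto
  then have "payoff x p (n - 1) (\<beta>(v := b)) (\<lambda>_. \<beta>) = ?u v b + R"
    unfolding payoff_def using assms(3) by (simp add: sum.remove[of "{0..x}" v])
  moreover have "payoff x p (n - 1) \<beta> (\<lambda>_. \<beta>) = ?u v (\<beta> v) + R"
    unfolding payoff_def R_def using assms(3) by (simp add: sum.remove[of "{0..x}" v])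
  ultimately have "?u v b \<le> ?u v (\<beta> v)" by simp
  moreover have "p v > 0" using pos assms(3) by simp
  ultimately show ?thesis
    by (simp add: win_prob_symmetric)
qed

lemma SE_mono:
  assumes pos: "\<forall>v\<in>{0..x}. p v > 0" and se: "is_SE x p n \<beta>"
    and "v \<le> v'" and "v' \<le> x"
  shows "\<beta> v \<le> \<beta> v'"
proof (cases "v = v'")
  case False
  have nonneg: "\<forall>v\<in>{0..x}. p v \<ge> 0" using pos by (simp add: less_imp_le)
  have "mono (\<lambda>c. below_prob x p \<beta> c ^ (n - 1))"
    using below_prob_mono[OF nonneg] below_prob_nonneg[OF nonneg]
    by (intro monoI power_mono) (auto simp: mono_def)
  then show ?thesis
  proof (rule optimal_bid_mono)
    show "real v < real v'" using False \<open>v \<le> v'\<close> by simp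
    show "real v * below_prob x p \<beta> (\<beta> v') ^ (n - 1) - real (\<beta> v')
        \<le> real v * below_prob x p \<beta> (\<beta> v) ^ (n - 1) - real (\<beta> v)"
      using SE_best_response[OF pos se, of v "\<beta> v'"] SE_le_bound[OF se \<open>v' \<le> x\<close>] assms(3,4)
      by simp
    show "real v' * below_prob x p \<beta> (\<beta> v) ^ (n - 1) - real (\<beta> v)
        \<le> real v' * below_prob x p \<beta> (\<beta> v') ^ (n - 1) - real (\<beta> v')"
      using SE_best_response[OF pos se, of v' "\<beta> v"] SE_le_bound[OF se, of v] assms(3,4)
      by simp
  qed
qed simp

lemma below_prob_at_first_difference:
  assumes nonneg: "\<forall>v\<in>{0..x}. p v \<ge> 0"
    and mono: "mono_on {0..x} g" "mono_on {0..x} g'"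
    and agree: "\<forall>w<v. g w = g' w" and "v \<le> x" and "g v < g' v"
  shows "below_prob x p g' (g v) = below_prob x p g (g v)"
    and "below_prob x p g' (g' v) = below_prob x p id v"
    and "below_prob x p id v + p v \<le> below_prob x p g (g v + 1)"
proof -
  have up: "g v \<le> g w" "g' v \<le> g' w" if "v \<le> w" "w \<le> x" for w
    using mono \<open>v \<le> x\<close> that by (auto intro: mono_onD)
  have down: "g w \<le> g v" if "w \<le> v" for w
    using mono(1) \<open>v \<le> x\<close> that by (auto intro: mono_onD)
  show "below_prob x p g' (g v) = below_prob x p g (g v)"
  proof (intro below_prob_cong ballI)
    fix w assume "w \<in> {0..x}"
    show "g' w < g v \<longleftrightarrow> g w < g v"
    proof (cases "w < v")
      case False
      then have "g v \<le> g w" "g v \<le> g' w"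
        using up[of w] \<open>w \<in> {0..x}\<close> \<open>g v < g' v\<close> by auto
      then show ?thesis by simp
    qed (use agree in simp)
  qed
  show "below_prob x p g' (g' v) = below_prob x p id v"
  proof (intro below_prob_cong ballI)
    fix w assume "w \<in> {0..x}"
    show "g' w < g' v \<longleftrightarrow> id w < v"
    proof (cases "w < v")
      case True
      then show ?thesis using agree down[of w] \<open>g v < g' v\<close> by simp
    next
      case False
      then show ?thesis using up(2)[of w] \<open>w \<in> {0..x}\<close> by simp
    qed
  qed
  show "below_prob x p id v + p v \<le> below_prob x p g (g v + 1)"
    using below_prob_id_le[OF nonneg, of "Suc v" g "g v + 1"] down below_prob_id_Suc[OF \<open>v \<le> x\<close>]
    by (simp add: less_Suc_eq_le)
qed

lemma SE_le_of_agree_below: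
  assumes n: "n \<ge> 2" and pos: "\<forall>v\<in>{0..x}. p v > 0"
    and se: "is_SE x p n \<beta>" and se': "is_SE x p n \<beta>'"
    and agree: "\<forall>w<v. \<beta> w = \<beta>' w" and "v \<le> x"
  shows "\<beta>' v \<le> \<beta> v"
proof (rule ccontr)
  assume "\<not> \<beta>' v \<le> \<beta> v"
  then have lt: "\<beta> v < \<beta>' v" by simp
  define m where "m = n - 1"
  define G where "G = below_prob x p id v"
  have nonneg: "\<forall>v\<in>{0..x}. p v \<ge> 0" using pos by (simp add: less_imp_le)
  have "mono_on {0..x} \<beta>" "mono_on {0..x} \<beta>'"
    using SE_mono[OF pos se] SE_mono[OF pos se'] by (auto intro: mono_onI)
  note first_difference = below_prob_at_first_difference[OF nonneg this agree \<open>v \<le> x\<close> lt]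
  have "0 \<le> G" "p v > 0" "m > 0"
    unfolding G_def m_def using below_prob_nonneg[OF nonneg] pos \<open>v \<le> x\<close> n by auto
  with first_difference(3) have strict: "G ^ m < below_prob x p \<beta> (\<beta> v + 1) ^ m"
    unfolding G_def by (smt (verit) power_strict_mono)
  have prefer_high: "real v * below_prob x p \<beta> (\<beta> v) ^ m - \<beta> v \<le> real v * G ^ m - \<beta>' v"
    using SE_best_response[OF pos se' \<open>v \<le> x\<close>, of "\<beta> v"] SE_le_bound[OF se \<open>v \<le> x\<close>]
      first_difference(1,2)
    unfolding m_def G_def by simp
  have prefer_low: "real v * below_prob x p \<beta> (\<beta> v + 1) ^ m - (\<beta> v + 1)
      \<le> real v * below_prob x p \<beta> (\<beta> v) ^ m - \<beta> v"
    using SE_best_response[OF pos se \<open>v \<le> x\<close>, of "\<beta> v + 1"] SE_le_bound[OF se' \<open>v \<le> x\<close>] lt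
    unfolding m_def by simp
  have "real v > 0"
    using prefer_high lt by (cases "v = 0") auto
  with strict have "real v * G ^ m < real v * below_prob x p \<beta> (\<beta> v + 1) ^ m"
    by simp
  then show False
    using prefer_low prefer_high lt by simp
qed

theorem lemma11:
  fixes x n :: nat and p :: "nat \<Rightarrow> real" and \<beta> \<beta>' :: "nat \<Rightarrow> nat"
  assumes "n \<ge> 2"
    and "\<forall>v\<in>{0..x}. p v > 0"
    and "(\<Sum>v\<in>{0..x}. p v) = 1"
    and "is_SE x p n \<beta>"
    and "is_SE x p n \<beta>'"
  shows "\<beta> = \<beta>'"
proof (rule extensionalityI)
  show "\<beta> \<in> extensional {0..x}" "\<beta>' \<in> extensional {0..x}"
    using SE_strategy[OF assms(4)] SE_strategy[OF assms(5)] unfolding strategies_def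
    by (auto simp: PiE_def)
  have "\<beta> v = \<beta>' v" if "v \<le> x" for v
    using that
  proof (induction v rule: less_induct)
    case (less v)
    then have "\<forall>w<v. \<beta> w = \<beta>' w" by simp
    then show ?case
      using SE_le_of_agree_below[OF assms(1,2,4,5)] SE_le_of_agree_below[OF assms(1,2,5,4)] less.prems
      by (metis le_antisym)
  qed
  then show "\<And>v. v \<in> {0..x} \<Longrightarrow> \<beta> v = \<beta>' v" by simp
qed

end
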